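(* Let $d>2$, let $\alpha,\lambda\in\overline{\mathbb Q}^*$, let $|\cdot|_v$ be an absolute value on $\overline{\mathbb Q}$, and let $L=\max\{|\alpha|_v,1/|\alpha|_v\}$. Then for all $n_0\ge1$, $$\left|\lim_{n\to\infty}\frac{\log M_{n,v}}{d^n}-\frac{\log M_{n_0,v}}{d^{n_0}}\right|\le(3d-2)\log(2L).$$
   Context: Define $A_0=\alpha$, $B_0=1$, and for $n\ge0$, $A_{n+1}=A_n^d+\lambda B_n^d$, $B_{n+1}=A_nB_n^{d-1}$ (so $[A_n:B_n]$ is the $n$-th iterate of $\alpha$ under $z\mapsto(z^d+\lambda)/z$). Set $M_{n,v}=\max\{|A_n|_v,|B_n|_v\}$. *)

theory Defs
  imports Complex_Main "HOL-Computational_Algebra.Polynomial"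
begin

text \<open>The algebraic closure of Q is realised as the set of algebraic complex numbers.\<close>
definition Qbar :: "complex set" where
  "Qbar = {z. algebraic z}"

definition is_absval_Qbar :: "(complex \<Rightarrow> real) \<Rightarrow> bool" where
  "is_absval_Qbar v \<longleftrightarrow>
     (\<forall>x\<in>Qbar. v x \<ge> 0 \<and> (v x = 0 \<longleftrightarrow> x = 0)) \<and>
     (\<forall>x\<in>Qbar. \<forall>y\<in>Qbar. v (x * y) = v x * v y) \<and>
     (\<forall>x\<in>Qbar. \<forall>y\<in>Qbar. v (x + y) \<le> v x + v y)"

text \<open>Homogeneous lift (A_n, B_n) of the orbit of alpha under z \<mapsto> (z^d + lambda)/z.\<close>
fun AB :: "nat \<Rightarrow> complex \<Rightarrow> complex \<Rightarrow> nat \<Rightarrow> complex \<times> complex" where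
  "AB d lam alpha 0 = (alpha, 1)"
| "AB d lam alpha (Suc n) =
     (let (A, B) = AB d lam alpha n in (A ^ d + lam * B ^ d, A * B ^ (d - 1)))"

definition Mv :: "(complex \<Rightarrow> real) \<Rightarrow> nat \<Rightarrow> complex \<Rightarrow> complex \<Rightarrow> nat \<Rightarrow> real" where
  "Mv v d lam alpha n = max (v (fst (AB d lam alpha n))) (v (snd (AB d lam alpha n)))"

end

theory Submission
  imports Defs
begin

text \<open>Write \<open>a n = |A\<^sub>n|\<^sub>v\<close>, \<open>b n = |B\<^sub>n|\<^sub>v\<close>, \<open>R = |\<lambda>|\<^sub>v\<close> and \<open>m n = max (a n) (b n)\<close>.
  The triangle inequality, applied to the recursion and to the two identities that recover
  \<open>(A\<^sub>n, B\<^sub>n)\<close> from \<open>(A\<^sub>n\<^sub>+\<^sub>1, B\<^sub>n\<^sub>+\<^sub>1)\<close>, shows that \<open>m (n + 1)\<close> and \<open>m n ^ d\<close> agree up to a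
  factor \<open>E\<^sub>n = 2 (2L)^(3d (d-1)^n)\<close> which does not depend on \<open>R\<close>; this needs separate
  arguments for small, moderate and large \<open>R\<close>. Hence \<open>|log m (n + 1) - d log m n| \<le> log E\<^sub>n\<close>,
  and as \<open>\<Sum> log E\<^sub>n / d^(n+1)\<close> converges geometrically with ratio \<open>(d - 1) / d\<close>,
  \<open>log m n / d^n\<close> converges, with tail from \<open>n\<^sub>0\<close> bounded by \<open>(3d - 2) log (2L)\<close>.

  Since \<open>|\<cdot>|\<^sub>v\<close> is only defined on \<open>Qbar\<close>, the argument also needs that algebraic numbers
  are closed under addition and multiplication.\<close>

section \<open>Algebraic numbers are closed under addition and multiplication\<close>

interpretation rat_vs: vector_space "\<lambda>q (z::complex). of_rat q * z"
  by unfold_locales (auto simp: algebra_simps of_rat_add of_rat_mult)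

lemma rat_vs_span_mult_Rats: "w \<in> \<rat> \<Longrightarrow> y \<in> rat_vs.span S \<Longrightarrow> w * y \<in> rat_vs.span S"
  by (metis Rats_cases rat_vs.span_scale)

text \<open>Among the first \<open>card T + 1\<close> powers of \<open>z\<close> there is either a repetition or a
  \<open>\<rat>\<close>-linear dependence; either one is a polynomial equation for \<open>z\<close>.\<close>
lemma algebraic_if_powers_in_finite_span:
  fixes z :: complex
  assumes T: "finite T" and span: "\<And>k. z ^ k \<in> rat_vs.span T"
  shows "algebraic z"
proof (cases "inj_on (\<lambda>k. z ^ k) {..card T}")
  case True
  define S where "S = (\<lambda>k. z ^ k) ` {..card T}"
  have "finite S" and card_S: "card S = Suc (card T)"
    unfolding S_def using True by (simp_all add: card_image)
  moreover have "S \<subseteq> rat_vs.span T" using span unfolding S_def by auto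
  ultimately have "rat_vs.dependent S"
    using rat_vs.independent_span_bound[OF T] by fastforce
  then obtain u where u: "\<exists>v\<in>S. u v \<noteq> 0" "(\<Sum>v\<in>S. of_rat (u v) * v) = 0"
    using rat_vs.dependent_finite[OF \<open>finite S\<close>] by auto
  define p where "p = (\<Sum>k\<le>card T. monom (of_rat (u (z ^ k)) :: complex) k)"
  have coeff_p: "coeff p i = (if i \<le> card T then of_rat (u (z ^ i)) else 0)" for i
    unfolding p_def by (simp add: coeff_sum coeff_monom)
  have "poly p z = (\<Sum>k\<le>card T. of_rat (u (z ^ k)) * z ^ k)"
    unfolding p_def by (simp add: poly_sum poly_monom)
  also have "\<dots> = (\<Sum>v\<in>S. of_rat (u v) * v)"
    unfolding S_def using True by (simp add: sum.reindex)
  finally have "poly p z = 0" using u(2) by simp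
  moreover from u(1) obtain k where "k \<le> card T" "u (z ^ k) \<noteq> 0" unfolding S_def by auto
  then have "p \<noteq> 0" using coeff_p[of k] by auto
  moreover have "coeff p i \<in> \<rat>" for i by (simp add: coeff_p)
  ultimately show ?thesis by (intro algebraicI') auto
next
  case False
  then obtain i j where ij: "i \<noteq> j" "z ^ i = z ^ j"
    unfolding inj_on_def by auto
  define p :: "complex poly" where "p = monom 1 j - monom 1 i"
  have coeff_p: "coeff p k = (if k = j then 1 else 0) - (if k = i then 1 else 0)" for k
    unfolding p_def by (simp add: coeff_monom)
  have "p \<noteq> 0" using coeff_p[of j] ij by auto
  moreover have "poly p z = 0" unfolding p_def using ij by (simp add: poly_monom)
  moreover have "coeff p k \<in> \<rat>" for k by (simp add: coeff_p)
  ultimately show ?thesis by (intro algebraicI') auto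
qed

lemma powers_in_finite_span_if_algebraic:
  fixes x :: complex
  assumes "algebraic x"
  obtains m where "\<And>k. x ^ k \<in> rat_vs.span ((\<lambda>i. x ^ i) ` {..<m})"
proof -
  obtain p where p_Rats: "\<forall>i. coeff p i \<in> \<rat>" and "p \<noteq> 0" and "poly p x = 0"
    using assms unfolding algebraic_altdef by blast
  define m where "m = degree p"
  define c where "c = lead_coeff p"
  have "m \<noteq> 0"
  proof
    assume "m = 0"
    then obtain c where "p = [:c:]" unfolding m_def by (metis degree_eq_zeroE)
    with \<open>p \<noteq> 0\<close> \<open>poly p x = 0\<close> show False by simp
  qed
  have "c \<noteq> 0" "c \<in> \<rat>" using \<open>p \<noteq> 0\<close> p_Rats unfolding c_def by simp_all
  have "poly p x = (\<Sum>i<m. coeff p i * x ^ i) + c * x ^ m"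
    unfolding c_def m_def by (simp add: poly_altdef lessThan_Suc_atMost[symmetric])
  then have x_pow_m: "x ^ m = (\<Sum>i<m. (- coeff p i / c) * x ^ i)"
    using \<open>poly p x = 0\<close> \<open>c \<noteq> 0\<close>
    by (simp add: sum_divide_distrib[symmetric] field_simps sum_negf eq_neg_iff_add_eq_0)
  have "x ^ k \<in> rat_vs.span ((\<lambda>i. x ^ i) ` {..<m})" for k
  proof (induction k rule: less_induct)
    case (less k)
    show ?case
    proof (cases "k < m")
      case True
      then show ?thesis by (intro rat_vs.span_base) auto
    next
      case False
      have "x ^ k = x ^ (k - m) * x ^ m" using False by (simp add: power_add[symmetric])
      also have "\<dots> = (\<Sum>i<m. (- coeff p i / c) * x ^ (k - m + i))"
        unfolding x_pow_m by (simp add: sum_distrib_left power_add algebra_simps)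
      finally have x_pow_k: "x ^ k = \<dots>" .
      show ?thesis unfolding x_pow_k
      proof (intro rat_vs.span_sum rat_vs_span_mult_Rats)
        fix i assume "i \<in> {..<m}"
        then show "- coeff p i / c \<in> \<rat>" "x ^ (k - m + i) \<in> rat_vs.span ((\<lambda>i. x ^ i) ` {..<m})"
          using p_Rats \<open>c \<in> \<rat>\<close> False \<open>m \<noteq> 0\<close> by (auto intro: less)
      qed
    qed
  qed
  then show ?thesis by (rule that)
qed

lemma rat_vs_span_mult:
  assumes "u \<in> rat_vs.span A" "w \<in> rat_vs.span B"
  shows "u * w \<in> rat_vs.span ((\<lambda>(a, b). a * b) ` (A \<times> B))"
proof -
  let ?P = "rat_vs.span ((\<lambda>(a, b). a * b) ` (A \<times> B))"
  have left: "a * w \<in> ?P" if "a \<in> A" for a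
    using assms(2)
  proof (induction w rule: rat_vs.span_induct_alt)
    case (step c b y)
    have "a * (of_rat c * b + y) = of_rat c * (a * b) + a * y" by (simp add: algebra_simps)
    moreover have "a * b \<in> ?P" using that step by (intro rat_vs.span_base) auto
    ultimately show ?case using step by (simp add: rat_vs.span_add rat_vs.span_scale)
  qed (simp add: rat_vs.span_zero)
  show ?thesis using assms(1)
  proof (induction u rule: rat_vs.span_induct_alt)
    case (step c a y)
    have "(of_rat c * a + y) * w = of_rat c * (a * w) + y * w" by (simp add: algebra_simps)
    then show ?case using step left by (simp add: rat_vs.span_add rat_vs.span_scale)
  qed (simp add: rat_vs.span_zero)
qed

text \<open>All powers of \<open>x + y\<close> and of \<open>x * y\<close> lie in the span of the finitely many
  products \<open>x\<^sup>i * y\<^sup>j\<close>.\<close>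
lemma algebraic_add_mult:
  fixes x y :: complex
  assumes "algebraic x" "algebraic y"
  shows "algebraic (x + y)" "algebraic (x * y)"
proof -
  obtain m where m: "\<And>k. x ^ k \<in> rat_vs.span ((\<lambda>i. x ^ i) ` {..<m})"
    using powers_in_finite_span_if_algebraic[OF assms(1)] by blast
  obtain n where n: "\<And>k. y ^ k \<in> rat_vs.span ((\<lambda>i. y ^ i) ` {..<n})"
    using powers_in_finite_span_if_algebraic[OF assms(2)] by blast
  define T where "T = (\<lambda>(a, b). a * b) ` ((\<lambda>i. x ^ i) ` {..<m} \<times> (\<lambda>i. y ^ i) ` {..<n})"
  have "finite T" unfolding T_def by simp
  have xy: "x ^ i * y ^ j \<in> rat_vs.span T" for i j unfolding T_def by (intro rat_vs_span_mult m n)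
  have "(x + y) ^ k \<in> rat_vs.span T" for k
    unfolding binomial_ring
  proof (intro rat_vs.span_sum)
    fix i
    have "of_nat (k choose i) * x ^ i * y ^ (k - i) = of_nat (k choose i) * (x ^ i * y ^ (k - i))"
      by simp
    then show "of_nat (k choose i) * x ^ i * y ^ (k - i) \<in> rat_vs.span T"
      using rat_vs_span_mult_Rats[OF _ xy] by (metis Rats_of_nat)
  qed
  then show "algebraic (x + y)" by (rule algebraic_if_powers_in_finite_span[OF \<open>finite T\<close>])
  have "(x * y) ^ k \<in> rat_vs.span T" for k using xy by (simp add: power_mult_distrib)
  then show "algebraic (x * y)" by (rule algebraic_if_powers_in_finite_span[OF \<open>finite T\<close>])
qed

lemma Qbar_add: "x \<in> Qbar \<Longrightarrow> y \<in> Qbar \<Longrightarrow> x + y \<in> Qbar"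
  and Qbar_mult: "x \<in> Qbar \<Longrightarrow> y \<in> Qbar \<Longrightarrow> x * y \<in> Qbar"
  unfolding Qbar_def using algebraic_add_mult by auto

lemma Qbar_of_rat: "of_rat r \<in> Qbar"
  unfolding Qbar_def by (auto intro: rat_imp_algebraic)

lemma Qbar_one: "1 \<in> Qbar" and Qbar_minus_one: "-1 \<in> Qbar"
  using Qbar_of_rat[of 1] Qbar_of_rat[of "-1"] by simp_all

lemma Qbar_power: "x \<in> Qbar \<Longrightarrow> x ^ n \<in> Qbar"
  by (induction n) (auto intro: Qbar_one Qbar_mult)

section \<open>Absolute values on \<open>Qbar\<close> and the homogeneous orbit\<close>

locale Qbar_absval =
  fixes v :: "complex \<Rightarrow> real"
  assumes absval: "is_absval_Qbar v"
begin

lemma nonneg: "x \<in> Qbar \<Longrightarrow> v x \<ge> 0"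
  and eq_0_iff: "x \<in> Qbar \<Longrightarrow> v x = 0 \<longleftrightarrow> x = 0"
  and mult: "x \<in> Qbar \<Longrightarrow> y \<in> Qbar \<Longrightarrow> v (x * y) = v x * v y"
  and triangle: "x \<in> Qbar \<Longrightarrow> y \<in> Qbar \<Longrightarrow> v (x + y) \<le> v x + v y"
  using absval unfolding is_absval_Qbar_def by auto

lemma one: "v 1 = 1"
  using mult[OF Qbar_one Qbar_one] eq_0_iff[OF Qbar_one] by simp

lemma minus_one: "v (-1) = 1"
proof -
  have "v (-1) ^ 2 = 1" using mult[OF Qbar_minus_one Qbar_minus_one] one by (simp add: power2_eq_square)
  then show ?thesis using nonneg[OF Qbar_minus_one] by (simp add: power2_eq_1_iff)
qed

lemma power: "x \<in> Qbar \<Longrightarrow> v (x ^ n) = v x ^ n"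
  by (induction n) (auto simp: one mult Qbar_power)

lemma reverse_triangle:
  assumes "x \<in> Qbar" "y \<in> Qbar"
  shows "v x \<le> v (x + y) + v y"
proof -
  have "-y \<in> Qbar" and "v (-y) = v y"
    using Qbar_mult[OF Qbar_minus_one \<open>y \<in> Qbar\<close>] mult[OF Qbar_minus_one \<open>y \<in> Qbar\<close>]
    by (simp_all add: minus_one)
  then show ?thesis using triangle[of "x + y" "-y"] assms by (simp add: Qbar_add)
qed

text \<open>The last two inequalities come from the identities
  \<open>\<lambda> B^d B^(d-1) = B^(d-1) A' - A^(d-1) B'\<close> and \<open>A^d A^(d-1) = A^(d-1) A' - \<lambda> A^(d-2) B B'\<close>,
  which recover \<open>B\<close> and \<open>A\<close> from \<open>(A', B')\<close>.\<close>
lemma homogeneous_step_inequalities: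
  assumes Q: "A \<in> Qbar" "B \<in> Qbar" "lam \<in> Qbar" and "d \<ge> 2"
  defines "A' \<equiv> A ^ d + lam * B ^ d" and "B' \<equiv> A * B ^ (d - 1)"
  shows "v A' \<le> v A ^ d + v lam * v B ^ d"
    and "v A ^ d \<le> v A' + v lam * v B ^ d"
    and "v lam * v B ^ d \<le> v A' + v A ^ d"
    and "v B' = v A * v B ^ (d - 1)"
    and "v lam * v B ^ d * v B ^ (d - 1) \<le> v B ^ (d - 1) * v A' + v A ^ (d - 1) * v B'"
    and "v A ^ d * v A ^ (d - 1) \<le> v A ^ (d - 1) * v A' + v lam * v A ^ (d - 2) * v B * v B'"
proof -
  note Q' = Q Qbar_power Qbar_mult Qbar_add
  have "d = Suc (Suc (d - 2))" using \<open>d \<ge> 2\<close> by simp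
  then have pow: "x ^ d = x * x ^ (d - 1)" "x ^ (d - 1) = x * x ^ (d - 2)" for x :: complex
    by (metis diff_Suc_1 power_Suc)+
  have B_elim: "B ^ (d - 1) * A' = lam * B ^ d * B ^ (d - 1) + A ^ (d - 1) * B'"
    unfolding A'_def B'_def by (simp add: pow(1)[of A] algebra_simps)
  have A_elim: "A ^ (d - 1) * A' = A ^ d * A ^ (d - 1) + lam * A ^ (d - 2) * B * B'"
    unfolding A'_def B'_def pow(2)[of A] pow(1)[of B] by (simp add: algebra_simps)
  have Q'': "A' \<in> Qbar" "B' \<in> Qbar" unfolding A'_def B'_def by (simp_all add: Q')
  show "v A' \<le> v A ^ d + v lam * v B ^ d"
    using triangle[of "A ^ d" "lam * B ^ d"] unfolding A'_def by (simp add: Q' mult power)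
  show "v A ^ d \<le> v A' + v lam * v B ^ d"
    using reverse_triangle[of "A ^ d" "lam * B ^ d"] unfolding A'_def by (simp add: Q' mult power)
  show "v lam * v B ^ d \<le> v A' + v A ^ d"
    using reverse_triangle[of "lam * B ^ d" "A ^ d"] unfolding A'_def by (simp add: Q' mult power add.commute)
  show "v B' = v A * v B ^ (d - 1)"
    unfolding B'_def by (simp add: Q' mult power)
  show "v lam * v B ^ d * v B ^ (d - 1) \<le> v B ^ (d - 1) * v A' + v A ^ (d - 1) * v B'"
    using reverse_triangle[of "lam * B ^ d * B ^ (d - 1)" "A ^ (d - 1) * B'"]
    unfolding B_elim[symmetric] by (simp add: Q' Q'' mult power)
  show "v A ^ d * v A ^ (d - 1) \<le> v A ^ (d - 1) * v A' + v lam * v A ^ (d - 2) * v B * v B'"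
    using reverse_triangle[of "A ^ d * A ^ (d - 1)" "lam * A ^ (d - 2) * B * B'"]
    unfolding A_elim[symmetric] by (simp add: Q' Q'' mult power)
qed

end

lemma AB_Suc:
  "AB d lam alpha (Suc n) =
     (fst (AB d lam alpha n) ^ d + lam * snd (AB d lam alpha n) ^ d,
      fst (AB d lam alpha n) * snd (AB d lam alpha n) ^ (d - 1))"
  by (simp add: Let_def split_def)

lemma AB_in_Qbar:
  assumes "alpha \<in> Qbar" "lam \<in> Qbar"
  shows "fst (AB d lam alpha n) \<in> Qbar" "snd (AB d lam alpha n) \<in> Qbar"
  by (induction n)
    (use assms in \<open>auto simp del: AB.simps simp: AB.simps(1) AB_Suc Qbar_one Qbar_add Qbar_mult Qbar_power\<close>)

section \<open>Limits of quasi-geometric sequences\<close>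

lemma tendsto_of_summable_increments:
  fixes G t :: "nat \<Rightarrow> real"
  assumes "t sums S" and increment_le: "\<And>k. \<bar>G (Suc (k + n0)) - G (k + n0)\<bar> \<le> t k"
  shows "\<exists>h. G \<longlonglongrightarrow> h \<and> \<bar>h - G n0\<bar> \<le> S"
proof -
  define D where "D k = G (Suc (k + n0)) - G (k + n0)" for k
  have D_le_t: "\<bar>D k\<bar> \<le> t k" for k unfolding D_def by (rule increment_le)
  have "summable t" using \<open>t sums S\<close> by (rule sums_summable)
  have "summable (\<lambda>k. \<bar>D k\<bar>)"
    by (rule summable_comparison_test[OF _ \<open>summable t\<close>]) (use D_le_t in auto)
  then have "summable D" by (rule summable_rabs_cancel)
  have "G (n + n0) = G n0 + (\<Sum>k<n. D k)" for n
    by (induction n) (auto simp: D_def)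
  moreover have "(\<lambda>n. G n0 + (\<Sum>k<n. D k)) \<longlonglongrightarrow> G n0 + suminf D"
    by (intro tendsto_add tendsto_const summable_LIMSEQ \<open>summable D\<close>)
  ultimately have "G \<longlonglongrightarrow> G n0 + suminf D"
    by (simp add: LIMSEQ_offset[where k = n0])
  have "\<bar>suminf D\<bar> \<le> (\<Sum>k. \<bar>D k\<bar>)"
    using summable_norm[of D] \<open>summable (\<lambda>k. \<bar>D k\<bar>)\<close> by simp
  also have "\<dots> \<le> suminf t"
    by (intro suminf_le \<open>summable (\<lambda>k. \<bar>D k\<bar>)\<close> \<open>summable t\<close>) (use D_le_t in auto)
  also have "\<dots> = S" using \<open>t sums S\<close> by (rule sums_unique[symmetric])
  finally have "\<bar>(G n0 + suminf D) - G n0\<bar> \<le> S" by simp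
  then show ?thesis using \<open>G \<longlonglongrightarrow> G n0 + suminf D\<close> by blast
qed

lemma quasi_geometric_limit_bound:
  fixes g :: "nat \<Rightarrow> real" and d c0 c1 :: real
  assumes "d > 1" and "c0 \<ge> 0" and "c1 \<ge> 0" and "n0 \<ge> 1"
    and step: "\<And>n. n \<ge> 1 \<Longrightarrow> \<bar>g (Suc n) - d * g n\<bar> \<le> c0 + c1 * (d - 1) ^ n"
  shows "\<exists>h. (\<lambda>n. g n / d ^ n) \<longlonglongrightarrow> h \<and>
           \<bar>h - g n0 / d ^ n0\<bar> \<le> c0 / (d * (d - 1)) + c1 * ((d - 1) / d)"
proof -
  define r where "r = (d - 1) / d"
  define t where "t k = c0 / d ^ (n0 + 1) * (1 / d) ^ k + (c1 / d) * r ^ n0 * r ^ k" for k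
  define S where "S = c0 / d ^ (n0 + 1) * (1 / (1 - 1 / d)) + (c1 / d) * r ^ n0 * (1 / (1 - r))"
  have "0 \<le> r" "r < 1" unfolding r_def using \<open>d > 1\<close> by auto
  have "t sums S"
    unfolding t_def S_def
    by (intro sums_add sums_mult geometric_sums) (use \<open>d > 1\<close> \<open>0 \<le> r\<close> \<open>r < 1\<close> in auto)
  moreover have "\<bar>g (Suc (k + n0)) / d ^ Suc (k + n0) - g (k + n0) / d ^ (k + n0)\<bar> \<le> t k" for k
  proof -
    have "\<bar>g (Suc (k + n0)) / d ^ Suc (k + n0) - g (k + n0) / d ^ (k + n0)\<bar>
            = \<bar>g (Suc (k + n0)) - d * g (k + n0)\<bar> / d ^ Suc (k + n0)"
      using \<open>d > 1\<close> by (simp add: field_simps abs_divide)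
    also have "\<dots> \<le> (c0 + c1 * (d - 1) ^ (k + n0)) / d ^ Suc (k + n0)"
      using step[of "k + n0"] \<open>n0 \<ge> 1\<close> \<open>d > 1\<close> by (intro divide_right_mono) auto
    also have "\<dots> = t k"
      unfolding t_def r_def using \<open>d > 1\<close> by (simp add: field_simps power_add power_divide)
    finally show ?thesis .
  qed
  ultimately obtain h where h: "(\<lambda>n. g n / d ^ n) \<longlonglongrightarrow> h" "\<bar>h - g n0 / d ^ n0\<bar> \<le> S"
    using tendsto_of_summable_increments[of t S "\<lambda>n. g n / d ^ n" n0] by blast
  have "S = c0 / (d ^ n0 * (d - 1)) + c1 * r ^ n0"
    unfolding S_def r_def using \<open>d > 1\<close> by (simp add: field_simps)
  also have "\<dots> \<le> c0 / (d * (d - 1)) + c1 * r"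
  proof (intro add_mono)
    have "d ^ 1 \<le> d ^ n0" using \<open>n0 \<ge> 1\<close> \<open>d > 1\<close> by (intro power_increasing) auto
    then show "c0 / (d ^ n0 * (d - 1)) \<le> c0 / (d * (d - 1))"
      using \<open>c0 \<ge> 0\<close> \<open>d > 1\<close> by (intro divide_left_mono mult_right_mono) auto
    have "r ^ n0 \<le> r ^ 1" using \<open>0 \<le> r\<close> \<open>r < 1\<close> \<open>n0 \<ge> 1\<close> by (intro power_decreasing) auto
    then show "c1 * r ^ n0 \<le> c1 * r" using \<open>c1 \<ge> 0\<close> by (intro mult_left_mono) auto
  qed
  finally show ?thesis using h unfolding r_def by (blast intro: order_trans)
qed

section \<open>Growth of the orbit norms\<close>

text \<open>Abstract form of \<open>a n = |A\<^sub>n|\<^sub>v\<close>, \<open>b n = |B\<^sub>n|\<^sub>v\<close> and \<open>R = |\<lambda>|\<^sub>v\<close>,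
  retaining only the consequences of the triangle inequality listed in
  \<open>Qbar_absval.homogeneous_step_inequalities\<close>.\<close>
locale orbit_norms =
  fixes d :: nat and R :: real and a b :: "nat \<Rightarrow> real"
  assumes d_ge_3: "d \<ge> 3" and R_pos: "R > 0"
    and a_nonneg: "a n \<ge> 0" and b_nonneg: "b n \<ge> 0"
    and a_Suc_le: "a (Suc n) \<le> a n ^ d + R * b n ^ d"
    and a_pow_le: "a n ^ d \<le> a (Suc n) + R * b n ^ d"
    and R_b_pow_le: "R * b n ^ d \<le> a (Suc n) + a n ^ d"
    and b_Suc: "b (Suc n) = a n * b n ^ (d - 1)"
    and B_elim: "R * b n ^ d * b n ^ (d - 1) \<le> b n ^ (d - 1) * a (Suc n) + a n ^ (d - 1) * b (Suc n)"
    and A_elim: "a n ^ d * a n ^ (d - 1) \<le> a n ^ (d - 1) * a (Suc n) + R * a n ^ (d - 2) * b n * b (Suc n)"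
begin

lemma mult_power_pred: "(x::real) * x ^ (d - 1) = x ^ d"
  and power_minus_2_mult: "(x::real) ^ (d - 2) * x = x ^ (d - 1)"
proof -
  have "d = Suc (Suc (d - 2))" using d_ge_3 by simp
  then show "x * x ^ (d - 1) = x ^ d" "x ^ (d - 2) * x = x ^ (d - 1)"
    by (metis diff_Suc_1 power_Suc power_Suc2)+
qed

lemma max_Suc_le: "max (a (Suc n)) (b (Suc n)) \<le> (1 + R) * max (a n) (b n) ^ d"
proof -
  let ?m = "max (a n) (b n)"
  have "?m \<ge> 0" using a_nonneg[of n] by simp
  have pow_le: "a n ^ d \<le> ?m ^ d" "b n ^ d \<le> ?m ^ d" "b n ^ (d - 1) \<le> ?m ^ (d - 1)"
    using a_nonneg[of n] b_nonneg[of n] by (auto intro!: power_mono)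
  have "R * b n ^ d \<le> R * ?m ^ d" using R_pos pow_le(2) by simp
  then have a_Suc: "a (Suc n) \<le> (1 + R) * ?m ^ d"
    using a_Suc_le[of n] pow_le(1) by (simp add: distrib_right)
  have "b (Suc n) \<le> ?m * ?m ^ (d - 1)"
    unfolding b_Suc using pow_le(3) a_nonneg[of n] b_nonneg[of n] by (intro mult_mono) auto
  then have "b (Suc n) \<le> ?m ^ d" by (simp only: mult_power_pred)
  also have "\<dots> \<le> (1 + R) * ?m ^ d" using R_pos \<open>?m \<ge> 0\<close> by (simp add: distrib_right)
  finally show ?thesis using a_Suc by simp
qed

lemma max_pow_le: "max (a n) (b n) ^ d \<le> max (2 / R) (1 + R) * max (a (Suc n)) (b (Suc n))"
proof -
  let ?m' = "max (a (Suc n)) (b (Suc n))"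
  have "?m' \<ge> 0" using a_nonneg[of "Suc n"] by simp
  consider "a n = 0" "b n = 0" | "a n \<le> b n" "b n > 0" | "b n < a n"
    using a_nonneg[of n] b_nonneg[of n] by fastforce
  then show ?thesis
  proof cases
    case 1
    then show ?thesis using d_ge_3 R_pos \<open>?m' \<ge> 0\<close> by (simp add: zero_power)
  next
    case 2
    have "a n ^ (d - 1) \<le> b n ^ (d - 1)" using 2 a_nonneg[of n] by (intro power_mono) auto
    then have "a n ^ (d - 1) * b (Suc n) \<le> b n ^ (d - 1) * ?m'"
      using a_nonneg b_nonneg by (intro mult_mono) auto
    moreover have "b n ^ (d - 1) * a (Suc n) \<le> b n ^ (d - 1) * ?m'"
      using 2 by (intro mult_left_mono) auto
    ultimately have "(R * b n ^ d) * b n ^ (d - 1) \<le> (2 * ?m') * b n ^ (d - 1)"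
      using B_elim[of n] by (simp add: algebra_simps)
    then have "b n ^ d \<le> (2 / R) * ?m'" using 2 R_pos by (simp add: field_simps)
    also have "\<dots> \<le> max (2 / R) (1 + R) * ?m'" using \<open>?m' \<ge> 0\<close> by (intro mult_right_mono) auto
    finally show ?thesis using 2 by (simp add: max_def)
  next
    case 3
    have "a n ^ (d - 2) * b n \<le> a n ^ (d - 2) * a n"
      using 3 b_nonneg[of n] by (intro mult_left_mono) auto
    then have "a n ^ (d - 2) * b n \<le> a n ^ (d - 1)" by (simp only: power_minus_2_mult)
    then have "(a n ^ (d - 2) * b n) * b (Suc n) \<le> a n ^ (d - 1) * ?m'"
      using a_nonneg b_nonneg by (intro mult_mono) auto
    then have "R * a n ^ (d - 2) * b n * b (Suc n) \<le> R * (a n ^ (d - 1) * ?m')"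
      using R_pos by (simp add: mult.assoc mult_left_mono)
    moreover have "a n ^ (d - 1) * a (Suc n) \<le> a n ^ (d - 1) * ?m'"
      using 3 b_nonneg[of n] by (intro mult_left_mono) auto
    ultimately have "(a n ^ d) * a n ^ (d - 1) \<le> ((1 + R) * ?m') * a n ^ (d - 1)"
      using A_elim[of n] by (simp add: algebra_simps)
    then have "a n ^ d \<le> (1 + R) * ?m'" using 3 b_nonneg[of n] by simp
    also have "\<dots> \<le> max (2 / R) (1 + R) * ?m'" using \<open>?m' \<ge> 0\<close> by (intro mult_right_mono) auto
    finally show ?thesis using 3 by simp
  qed
qed

lemma max_Suc_pos:
  assumes "max (a n) (b n) > 0"
  shows "max (a (Suc n)) (b (Suc n)) > 0"
proof -
  have "0 < max (a n) (b n) ^ d" using assms by simp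
  also have "\<dots> \<le> max (2 / R) (1 + R) * max (a (Suc n)) (b (Suc n))" by (rule max_pow_le)
  finally show ?thesis using R_pos by (simp add: zero_less_mult_iff)
qed

end

locale normalised_orbit_norms = orbit_norms +
  fixes L :: real
  assumes a_0_pos: "a 0 > 0" and b_0: "b 0 = 1" and L_eq: "L = max (a 0) (1 / a 0)"
begin

lemma max_pos: "max (a n) (b n) > 0"
  by (induction n) (use b_0 max_Suc_pos in auto)

lemma L_ge_1: "L \<ge> 1"
proof (cases "a 0 \<ge> 1")
  case False
  then have "1 / a 0 \<ge> 1" using a_0_pos by (simp add: field_simps)
  then show ?thesis unfolding L_eq by simp
qed (simp add: L_eq)

lemma a_0_le_L: "a 0 \<le> L" and inverse_L_le_a_0: "1 / L \<le> a 0"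
proof -
  show "a 0 \<le> L" unfolding L_eq by simp
  have "1 / a 0 \<le> L" unfolding L_eq by simp
  then show "1 / L \<le> a 0" using a_0_pos L_ge_1 by (simp add: field_simps)
qed

subsection \<open>Small \<open>R\<close>\<close>

text \<open>For \<open>R < 1/2\<close> the ratio \<open>a n / b n\<close> can drop at most like \<open>q n\<close> until \<open>B\<close> takes over,
  i.e. until \<open>a\<^sup>d < 2 R b\<^sup>d\<close>; from then on \<open>R\<close> itself controls the loss.\<close>
definition q :: "nat \<Rightarrow> real" where "q n = 2 / (2 * L) ^ ((d - 1) ^ n)"

definition B_takes_over :: "nat \<Rightarrow> bool"
  where "B_takes_over k \<longleftrightarrow> a k < b k \<and> a k ^ d < 2 * R * b k ^ d"

lemma q_pos: "q n > 0"
  using L_ge_1 unfolding q_def by simp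

lemma q_le_1: "q n \<le> 1"
proof -
  have "(2 * L) ^ 1 \<le> (2 * L) ^ ((d - 1) ^ n)"
    using L_ge_1 d_ge_3 by (intro power_increasing) auto
  then show ?thesis using L_ge_1 unfolding q_def by (simp add: field_simps)
qed

lemma q_antimono: "k \<le> n \<Longrightarrow> q n \<le> q k"
proof -
  assume "k \<le> n"
  then have "(d - 1) ^ k \<le> (d - 1) ^ n" using d_ge_3 by (intro power_increasing) auto
  then have "(2 * L) ^ ((d - 1) ^ k) \<le> (2 * L) ^ ((d - 1) ^ n)"
    by (rule power_increasing[where a = "2 * L"]) (use L_ge_1 in auto)
  moreover have "(2 * L) ^ ((d - 1) ^ k) > 0" using L_ge_1 by simp
  ultimately show ?thesis unfolding q_def by (simp add: frac_le)
qed

lemma q_Suc_le: "q (Suc n) \<le> q n ^ (d - 1) / 2"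
proof -
  define X where "X = (2 * L) ^ ((d - 1) ^ Suc n)"
  have "X > 0" using L_ge_1 unfolding X_def by simp
  have "((2 * L) ^ ((d - 1) ^ n)) ^ (d - 1) = X"
    unfolding X_def by (metis power_mult power_Suc mult.commute)
  then have "q n ^ (d - 1) = 2 ^ (d - 1) / X"
    unfolding q_def by (simp only: power_divide)
  moreover have "(2::real) ^ 2 \<le> 2 ^ (d - 1)" using d_ge_3 by (intro power_increasing) auto
  ultimately show ?thesis unfolding q_def X_def[symmetric] using \<open>X > 0\<close>
    by (simp add: field_simps)
qed

lemma small_R_b_pow_le:
  assumes "R < 1/2" and "\<not> B_takes_over n"
  shows "R * b n ^ d \<le> a n ^ d / 2"
proof (cases "b n \<le> a n")
  case True
  then have "b n ^ d \<le> a n ^ d" using b_nonneg by (intro power_mono) auto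
  then have "R * b n ^ d \<le> R * a n ^ d" using R_pos by simp
  also have "\<dots> \<le> a n ^ d / 2"
    using assms(1) a_nonneg[of n] mult_right_mono[of R "1/2" "a n ^ d"] by simp
  finally show ?thesis .
qed (use assms in \<open>auto simp: B_takes_over_def\<close>)

lemma small_R_before_takeover:
  assumes "R < 1/2"
  shows "(\<forall>k<n. \<not> B_takes_over k) \<Longrightarrow> q n * b n \<le> a n"
proof (induction n)
  case 0
  then show ?case using inverse_L_le_a_0 b_0 unfolding q_def by simp
next
  case (Suc n)
  then have IH: "q n * b n \<le> a n" and "\<not> B_takes_over n" by auto
  have "(q n * b n) ^ (d - 1) \<le> a n ^ (d - 1)"
    using IH q_pos[of n] b_nonneg[of n] by (intro power_mono) auto
  then have "q (Suc n) * b (Suc n) \<le> (q n ^ (d - 1) / 2) * (a n * b n ^ (d - 1))"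
    unfolding b_Suc using q_Suc_le a_nonneg b_nonneg by (intro mult_right_mono) auto
  also have "\<dots> = a n * (q n * b n) ^ (d - 1) / 2" by (simp add: power_mult_distrib)
  also have "\<dots> \<le> a n * a n ^ (d - 1) / 2"
    using \<open>(q n * b n) ^ (d - 1) \<le> a n ^ (d - 1)\<close> a_nonneg[of n] by (simp add: mult_left_mono)
  also have "\<dots> = a n ^ d / 2" by (simp only: mult_power_pred)
  also have "\<dots> \<le> a (Suc n)"
    using a_pow_le[of n] small_R_b_pow_le[OF assms \<open>\<not> B_takes_over n\<close>] by simp
  finally show ?case .
qed

lemma small_R_max_pow_le_no_takeover:
  assumes "R < 1/2" and "\<forall>k<n. \<not> B_takes_over k"
  shows "q n ^ d / 4 * max (a n) (b n) ^ d \<le> max (a (Suc n)) (b (Suc n))"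
proof -
  have qb: "q n * b n \<le> a n" using small_R_before_takeover assms by blast
  have "q n ^ d \<le> q n ^ 1"
    using q_pos[of n] q_le_1[of n] d_ge_3 by (intro power_decreasing) auto
  then have q_pow: "q n ^ d / 4 \<le> q n" "q n ^ d / 4 \<le> 1 / 2"
    using q_pos[of n] q_le_1[of n] by auto
  show ?thesis
  proof (cases "b n \<le> a n")
    case True
    have "\<not> B_takes_over n" using True unfolding B_takes_over_def by simp
    have "q n ^ d / 4 * a n ^ d \<le> a n ^ d / 2"
      using q_pow(2) a_nonneg[of n] mult_right_mono[of "q n ^ d / 4" "1/2" "a n ^ d"] by simp
    also have "\<dots> \<le> a (Suc n)"
      using a_pow_le[of n] small_R_b_pow_le[OF assms(1) \<open>\<not> B_takes_over n\<close>] by simp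
    finally show ?thesis using True by simp
  next
    case False
    have "q n ^ d / 4 * b n ^ d \<le> q n * b n ^ d"
      using q_pow(1) b_nonneg[of n] by (intro mult_right_mono) auto
    also have "\<dots> = (q n * b n) * b n ^ (d - 1)" by (simp add: mult_power_pred[symmetric])
    also have "\<dots> \<le> a n * b n ^ (d - 1)" using qb b_nonneg[of n] by (simp add: mult_right_mono)
    finally show ?thesis using False b_Suc[of n] by simp
  qed
qed

lemma small_R_max_pow_le_after_takeover:
  assumes "R < 1/2" and "k \<le> n" and "B_takes_over k" and "\<forall>j<k. \<not> B_takes_over j"
  shows "q n ^ d / 4 * max (a n) (b n) ^ d \<le> max (a (Suc n)) (b (Suc n))"
proof -
  have "q k * b k \<le> a k" using small_R_before_takeover[OF assms(1)] assms(4) by blast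
  from \<open>B_takes_over k\<close> have "b k > 0" and ak: "a k ^ d < 2 * R * b k ^ d"
    unfolding B_takes_over_def using a_nonneg[of k] by auto
  have "(q k * b k) ^ d \<le> a k ^ d"
    using \<open>q k * b k \<le> a k\<close> q_pos[of k] \<open>b k > 0\<close> by (intro power_mono) auto
  then have "q k ^ d * b k ^ d < (2 * R) * b k ^ d" using ak by (simp add: power_mult_distrib)
  then have "q k ^ d < 2 * R" using \<open>b k > 0\<close> by simp
  moreover have "q n ^ d \<le> q k ^ d"
    using q_antimono[OF \<open>k \<le> n\<close>] q_pos[of n] by (intro power_mono) auto
  ultimately have "q n ^ d / 4 \<le> R / 2" by simp
  have "(1 + R) * R \<le> 2"
    using assms(1) R_pos mult_mono[of R "1/2" R "1/2"] by (simp add: algebra_simps)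
  then have "max (2 / R) (1 + R) = 2 / R" using R_pos by (simp add: field_simps)
  then have "max (a n) (b n) ^ d \<le> 2 / R * max (a (Suc n)) (b (Suc n))"
    using max_pow_le[of n] by simp
  then have "R / 2 * max (a n) (b n) ^ d \<le> max (a (Suc n)) (b (Suc n))"
    using R_pos by (simp add: field_simps)
  moreover have "q n ^ d / 4 * max (a n) (b n) ^ d \<le> R / 2 * max (a n) (b n) ^ d"
    using \<open>q n ^ d / 4 \<le> R / 2\<close> max_pos[of n] by (intro mult_right_mono) auto
  ultimately show ?thesis by linarith
qed

lemma small_R_max_pow_le:
  assumes "R < 1/2"
  shows "max (a n) (b n) ^ d \<le> (2 * L) ^ (d * (d - 1) ^ n) * max (a (Suc n)) (b (Suc n))"
proof -
  have "q n ^ d / 4 * max (a n) (b n) ^ d \<le> max (a (Suc n)) (b (Suc n))"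
  proof (cases "\<exists>k<n. B_takes_over k")
    case True
    then obtain k0 where "k0 < n" "B_takes_over k0" by blast
    define k where "k = (LEAST k. B_takes_over k)"
    have "B_takes_over k" unfolding k_def using \<open>B_takes_over k0\<close> by (rule LeastI)
    moreover have "k \<le> n"
      unfolding k_def using \<open>k0 < n\<close> \<open>B_takes_over k0\<close> by (meson Least_le less_imp_le order_trans)
    moreover have "\<forall>j<k. \<not> B_takes_over j" unfolding k_def using not_less_Least by blast
    ultimately show ?thesis using small_R_max_pow_le_after_takeover[OF assms] by blast
  qed (use small_R_max_pow_le_no_takeover[OF assms] in auto)
  moreover define Y where "Y = (2 * L) ^ ((d - 1) ^ n)"
  have "Y > 0" using L_ge_1 unfolding Y_def by simp
  ultimately have "2 ^ d * max (a n) (b n) ^ d \<le> 4 * Y ^ d * max (a (Suc n)) (b (Suc n))"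
    unfolding q_def Y_def[symmetric] by (simp add: power_divide field_simps)
  moreover have "4 * max (a n) (b n) ^ d \<le> 2 ^ d * max (a n) (b n) ^ d"
    using d_ge_3 max_pos[of n] power_increasing[of 2 d "2::real"] by (intro mult_right_mono) auto
  ultimately have "max (a n) (b n) ^ d \<le> Y ^ d * max (a (Suc n)) (b (Suc n))" by simp
  moreover have "Y ^ d = (2 * L) ^ (d * (d - 1) ^ n)"
    unfolding Y_def by (simp only: power_mult[symmetric] mult.commute)
  ultimately show ?thesis by simp
qed

subsection \<open>Large \<open>R\<close>\<close>

text \<open>For \<open>R \<ge> (2L)\<^bsup>2d\<^esup>\<close> the term \<open>\<lambda>B\<^sup>d\<close> dominates the first step, and afterwards
  \<open>a n \<ge> (R / 2L) b n\<close> persists, so \<open>A\<close> dominates every later step.\<close>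
lemma large_R_consequences:
  assumes "R \<ge> (2 * L) ^ (2 * d)"
  shows "R / (2 * L) \<ge> 2" "(R / (2 * L)) ^ d \<ge> 2 * R" "(R / (2 * L)) ^ (d - 2) \<ge> 2"
    "R \<ge> 2 * L ^ d"
proof -
  define P where "P = 2 * L"
  have "P \<ge> 2" using L_ge_1 unfolding P_def by simp
  have "P ^ 2 \<le> P ^ (2 * d)" using \<open>P \<ge> 2\<close> d_ge_3 by (intro power_increasing) auto
  moreover have "2 * P \<le> P ^ 2" using \<open>P \<ge> 2\<close> by (simp add: power2_eq_square mult_right_mono)
  ultimately have "2 * P \<le> R" using assms unfolding P_def by linarith
  then show t_ge_2: "R / (2 * L) \<ge> 2" using \<open>P \<ge> 2\<close> unfolding P_def by (simp add: field_simps)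
  have "R \<ge> 1" using \<open>2 * P \<le> R\<close> \<open>P \<ge> 2\<close> by linarith
  have "P ^ 1 \<le> P ^ (3 * d)" using \<open>P \<ge> 2\<close> d_ge_3 by (intro power_increasing) auto
  then have "P ^ d * 2 \<le> P ^ d * P ^ (3 * d)" using \<open>P \<ge> 2\<close> by (intro mult_left_mono) auto
  also have "\<dots> = (P ^ (2 * d)) ^ 2" by (simp add: power_mult[symmetric] power_add[symmetric])
  also have "\<dots> \<le> R ^ 2" using assms \<open>P \<ge> 2\<close> unfolding P_def by (intro power_mono) auto
  also have "\<dots> \<le> R ^ (d - 1)" using \<open>R \<ge> 1\<close> d_ge_3 by (intro power_increasing) auto
  finally have "R * (P ^ d * 2) \<le> R * R ^ (d - 1)" using \<open>R \<ge> 1\<close> by simp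
  then have "2 * R * P ^ d \<le> R ^ d" by (simp only: mult_power_pred mult_ac)
  then show "(R / (2 * L)) ^ d \<ge> 2 * R" unfolding P_def[symmetric] using \<open>P \<ge> 2\<close>
    by (simp add: power_divide field_simps)
  have "(R / (2 * L)) ^ 1 \<le> (R / (2 * L)) ^ (d - 2)" using t_ge_2 d_ge_3 by (intro power_increasing) auto
  then show "(R / (2 * L)) ^ (d - 2) \<ge> 2" using t_ge_2 by simp
  have "2 * L ^ d \<le> 2 ^ d * L ^ d"
    using L_ge_1 d_ge_3 power_increasing[of 1 d "2::real"] by (intro mult_right_mono) auto
  also have "\<dots> = P ^ d" unfolding P_def by (simp add: power_mult_distrib)
  also have "\<dots> \<le> P ^ (2 * d)" using \<open>P \<ge> 2\<close> by (intro power_increasing) auto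
  finally show "R \<ge> 2 * L ^ d" using assms unfolding P_def by linarith
qed

lemma large_R_b_pow_le:
  assumes "R \<ge> (2 * L) ^ (2 * d)" and "R / (2 * L) * b n \<le> a n"
  shows "R * b n ^ d \<le> a n ^ d / 2"
proof -
  let ?t = "R / (2 * L)"
  have "2 * R * b n ^ d \<le> ?t ^ d * b n ^ d"
    using large_R_consequences(2)[OF assms(1)] b_nonneg[of n] by (intro mult_right_mono) auto
  also have "\<dots> = (?t * b n) ^ d" by (simp only: power_mult_distrib)
  also have "\<dots> \<le> a n ^ d"
  proof (rule power_mono[OF assms(2)])
    show "0 \<le> ?t * b n"
      using large_R_consequences(1)[OF assms(1)] b_nonneg[of n] by (intro mult_nonneg_nonneg) linarith+
  qed
  finally show ?thesis by simp
qed

lemma large_R_a_dominates: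
  assumes "R \<ge> (2 * L) ^ (2 * d)"
  shows "R / (2 * L) * b (Suc k) \<le> a (Suc k) \<and> a (Suc k) > 0"
proof (induction k)
  case 0
  let ?t = "R / (2 * L)"
  have "a 0 ^ d \<le> L ^ d" using a_0_le_L a_0_pos by (intro power_mono) auto
  then have "a 1 \<ge> R / 2"
    using R_b_pow_le[of 0] b_0 large_R_consequences(4)[OF assms] by simp
  have "?t * b 1 \<le> ?t * L"
    using b_Suc[of 0] b_0 a_0_le_L large_R_consequences(1)[OF assms] by (intro mult_left_mono) auto
  also have "?t * L = R / 2" using L_ge_1 by (simp add: field_simps)
  finally show ?case using \<open>a 1 \<ge> R / 2\<close> R_pos by simp
next
  case (Suc k)
  let ?t = "R / (2 * L)" and ?n = "Suc k"
  note t = large_R_consequences[OF assms]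
  have IH: "?t * b ?n \<le> a ?n" "a ?n > 0" using Suc by auto
  have a_Suc: "a ?n ^ d / 2 \<le> a (Suc ?n)"
    using a_pow_le[of ?n] large_R_b_pow_le[OF assms IH(1)] by simp
  have "(?t * b ?n) ^ (d - 1) \<le> a ?n ^ (d - 1)"
    using IH(1) t(1) b_nonneg[of ?n] by (intro power_mono mult_nonneg_nonneg) linarith+
  have "?t ^ (d - 2) * (?t * b (Suc ?n)) = a ?n * (?t ^ (d - 2) * ?t) * b ?n ^ (d - 1)"
    unfolding b_Suc by (simp add: algebra_simps)
  also have "\<dots> = a ?n * (?t * b ?n) ^ (d - 1)"
    by (simp only: power_minus_2_mult power_mult_distrib mult.assoc)
  also have "\<dots> \<le> a ?n * a ?n ^ (d - 1)"
    using \<open>(?t * b ?n) ^ (d - 1) \<le> a ?n ^ (d - 1)\<close> IH by (intro mult_left_mono) auto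
  also have "\<dots> = a ?n ^ d" by (simp only: mult_power_pred)
  finally have "?t ^ (d - 2) * (?t * b (Suc ?n)) \<le> a ?n ^ d" .
  moreover have "2 * (?t * b (Suc ?n)) \<le> ?t ^ (d - 2) * (?t * b (Suc ?n))"
    using t(1,3) b_nonneg[of "Suc ?n"] by (intro mult_right_mono mult_nonneg_nonneg) linarith+
  moreover have "a ?n ^ d > 0" using IH by simp
  ultimately show ?case using a_Suc by linarith
qed

lemma large_R_max_bounds:
  assumes "R \<ge> (2 * L) ^ (2 * d)" and "n \<ge> 1"
  shows "max (a n) (b n) ^ d \<le> 2 * max (a (Suc n)) (b (Suc n))"
    and "max (a (Suc n)) (b (Suc n)) \<le> 2 * max (a n) (b n) ^ d"
proof -
  let ?t = "R / (2 * L)"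
  have "?t \<ge> 1" using large_R_consequences(1)[OF assms(1)] by simp
  have a_dom: "?t * b m \<le> a m" and max_eq_a: "max (a m) (b m) = a m" if "m \<ge> 1" for m
  proof -
    obtain k where "m = Suc k" using \<open>m \<ge> 1\<close> by (cases m) auto
    then show "?t * b m \<le> a m" using large_R_a_dominates[OF assms(1)] by blast
    moreover have "b m \<le> ?t * b m"
      using \<open>?t \<ge> 1\<close> b_nonneg[of m] mult_right_mono[of 1 ?t "b m"] by simp
    ultimately show "max (a m) (b m) = a m" by simp
  qed
  have Rb: "R * b n ^ d \<le> a n ^ d / 2"
    using large_R_b_pow_le[OF assms(1) a_dom[OF assms(2)]] .
  show "max (a n) (b n) ^ d \<le> 2 * max (a (Suc n)) (b (Suc n))"
    unfolding max_eq_a[OF assms(2)] max_eq_a[of "Suc n", simplified] using a_pow_le[of n] Rb by simp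
  show "max (a (Suc n)) (b (Suc n)) \<le> 2 * max (a n) (b n) ^ d"
    unfolding max_eq_a[OF assms(2)] max_eq_a[of "Suc n", simplified]
    using a_Suc_le[of n] Rb a_nonneg[of n] zero_le_power[of "a n" d] by linarith
qed

definition growth_bound :: "nat \<Rightarrow> real"
  where "growth_bound n = 2 * (2 * L) ^ (3 * d * (d - 1) ^ n)"

lemma growth_bound_ge: "(2 * L) ^ (2 * d) + 2 \<le> growth_bound n" "4 \<le> growth_bound n"
proof -
  have "2 * L \<ge> 2" using L_ge_1 by simp
  have "(d - 1) ^ n \<ge> 1" using d_ge_3 by (intro one_le_power) simp
  have "2 * L \<le> (2 * L) ^ (2 * d)"
    using \<open>2 * L \<ge> 2\<close> d_ge_3 power_increasing[of 1 "2 * d" "2 * L"] by simp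
  moreover have "(2 * L) ^ (2 * d) \<le> (2 * L) ^ (3 * d * (d - 1) ^ n)"
    using \<open>2 * L \<ge> 2\<close> \<open>(d - 1) ^ n \<ge> 1\<close> by (intro power_increasing) auto
  ultimately show "(2 * L) ^ (2 * d) + 2 \<le> growth_bound n" "4 \<le> growth_bound n"
    using \<open>2 * L \<ge> 2\<close> unfolding growth_bound_def by linarith+
qed

lemma max_Suc_le_growth_bound:
  assumes "n \<ge> 1"
  shows "max (a (Suc n)) (b (Suc n)) \<le> growth_bound n * max (a n) (b n) ^ d"
proof -
  have "0 \<le> max (a n) (b n) ^ d" using max_pos[of n] by simp
  show ?thesis
  proof (cases "R \<ge> (2 * L) ^ (2 * d)")
    case True
    have "2 \<le> growth_bound n" using growth_bound_ge(2)[of n] by linarith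
    then show ?thesis using large_R_max_bounds(2)[OF True assms] \<open>0 \<le> max (a n) (b n) ^ d\<close>
      by (meson mult_right_mono order_trans)
  next
    case False
    then have "1 + R \<le> growth_bound n" using growth_bound_ge(1)[of n] by linarith
    then show ?thesis
      using max_Suc_le[of n] \<open>0 \<le> max (a n) (b n) ^ d\<close> by (meson mult_right_mono order_trans)
  qed
qed

lemma max_pow_le_growth_bound:
  assumes "n \<ge> 1"
  shows "max (a n) (b n) ^ d \<le> growth_bound n * max (a (Suc n)) (b (Suc n))"
proof -
  let ?m' = "max (a (Suc n)) (b (Suc n))"
  have "0 \<le> ?m'" using max_pos[of "Suc n"] by simp
  consider "R \<ge> (2 * L) ^ (2 * d)" | "R < 1/2" | "1/2 \<le> R" "R < (2 * L) ^ (2 * d)" by linarith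
  then show ?thesis
  proof cases
    case 1
    have "2 \<le> growth_bound n" using growth_bound_ge(2)[of n] by linarith
    then show ?thesis using large_R_max_bounds(1)[OF 1 assms] \<open>0 \<le> ?m'\<close>
      by (meson mult_right_mono order_trans)
  next
    case 2
    have "(2 * L) ^ (d * (d - 1) ^ n) \<le> (2 * L) ^ (3 * d * (d - 1) ^ n)"
      using L_ge_1 by (intro power_increasing) auto
    then have "(2 * L) ^ (d * (d - 1) ^ n) \<le> growth_bound n"
      using L_ge_1 zero_le_power[of "2 * L" "3 * d * (d - 1) ^ n"] unfolding growth_bound_def
      by linarith
    then show ?thesis
      using small_R_max_pow_le[OF 2, of n] \<open>0 \<le> ?m'\<close> by (meson mult_right_mono order_trans)
  next
    case 3
    have "2 / R \<le> 4" using 3 R_pos by (simp add: field_simps)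
    then have "max (2 / R) (1 + R) \<le> growth_bound n"
      using 3 growth_bound_ge[of n] by linarith
    then show ?thesis
      using max_pow_le[of n] \<open>0 \<le> ?m'\<close> by (meson mult_right_mono order_trans)
  qed
qed

lemma log_max_step:
  assumes "n \<ge> 1"
  shows "\<bar>ln (max (a (Suc n)) (b (Suc n))) - real d * ln (max (a n) (b n))\<bar>
           \<le> ln 2 + 3 * real d * ln (2 * L) * (real d - 1) ^ n"
proof -
  have E_pos: "growth_bound n > 0" using growth_bound_ge(2)[of n] by linarith
  have ln_E: "ln (growth_bound n) = ln 2 + 3 * real d * ln (2 * L) * (real d - 1) ^ n"
    unfolding growth_bound_def using L_ge_1 d_ge_3
    by (simp add: ln_mult ln_realpow of_nat_diff algebra_simps)
  have ln_pow: "ln (max (a n) (b n) ^ d) = real d * ln (max (a n) (b n))"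
    using max_pos[of n] by (simp add: ln_realpow)
  have "ln (max (a (Suc n)) (b (Suc n))) \<le> ln (growth_bound n * max (a n) (b n) ^ d)"
    using max_Suc_le_growth_bound[OF assms] max_pos E_pos by (subst ln_le_cancel_iff) auto
  moreover have "ln (max (a n) (b n) ^ d) \<le> ln (growth_bound n * max (a (Suc n)) (b (Suc n)))"
    using max_pow_le_growth_bound[OF assms] max_pos E_pos by (subst ln_le_cancel_iff) auto
  ultimately show ?thesis
    using E_pos max_pos[of n] max_pos[of "Suc n"] by (simp add: ln_mult ln_pow ln_E abs_le_iff)
qed

text \<open>The geometric sums from \<open>quasi_geometric_limit_bound\<close> give
  \<open>ln 2 / (d (d - 1)) + 3 (d - 1) ln (2L)\<close>, and \<open>ln 2 / (d (d - 1)) \<le> ln (2L)\<close>.\<close>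
lemma log_max_limit:
  assumes "n0 \<ge> 1"
  shows "\<exists>h. (\<lambda>n. ln (max (a n) (b n)) / real d ^ n) \<longlonglongrightarrow> h \<and>
           \<bar>h - ln (max (a n0) (b n0)) / real d ^ n0\<bar> \<le> (3 * real d - 2) * ln (2 * L)"
proof -
  have "real d > 1" using d_ge_3 by simp
  have "0 \<le> ln (2::real)" "0 \<le> 3 * real d * ln (2 * L)" using L_ge_1 by simp_all
  then obtain h where h: "(\<lambda>n. ln (max (a n) (b n)) / real d ^ n) \<longlonglongrightarrow> h"
    "\<bar>h - ln (max (a n0) (b n0)) / real d ^ n0\<bar>
       \<le> ln 2 / (real d * (real d - 1)) + 3 * real d * ln (2 * L) * ((real d - 1) / real d)"
    using quasi_geometric_limit_bound[OF \<open>real d > 1\<close> _ _ assms log_max_step] by blast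
  have "1 * 1 \<le> real d * (real d - 1)" using d_ge_3 by (intro mult_mono) auto
  then have "ln 2 / (real d * (real d - 1)) \<le> ln 2 / 1" by (intro divide_left_mono) auto
  also have "\<dots> \<le> ln (2 * L)" using L_ge_1 by simp
  finally have "ln 2 / (real d * (real d - 1)) \<le> ln (2 * L)" .
  moreover have "3 * real d * ln (2 * L) * ((real d - 1) / real d) = (3 * real d - 3) * ln (2 * L)"
    using d_ge_3 by (simp add: field_simps)
  ultimately have "\<bar>h - ln (max (a n0) (b n0)) / real d ^ n0\<bar> \<le> (3 * real d - 2) * ln (2 * L)"
    using h(2) by (simp add: algebra_simps)
  then show ?thesis using h(1) by blast
qed

end

lemma normalised_orbit_norms_AB:
  assumes "is_absval_Qbar v" and "d > 2"
    and "alpha \<in> Qbar" "alpha \<noteq> 0" "lam \<in> Qbar" "lam \<noteq> 0"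
    and "L = max (v alpha) (1 / v alpha)"
  shows "normalised_orbit_norms d (v lam)
           (\<lambda>n. v (fst (AB d lam alpha n))) (\<lambda>n. v (snd (AB d lam alpha n))) L"
proof -
  interpret Qbar_absval v by (rule Qbar_absval.intro) fact
  note AB = AB_in_Qbar[OF assms(3,5)]
  have "d \<ge> 2" using assms(2) by simp
  {
    fix n
    have "fst (AB d lam alpha (Suc n)) = fst (AB d lam alpha n) ^ d + lam * snd (AB d lam alpha n) ^ d"
      "snd (AB d lam alpha (Suc n)) = fst (AB d lam alpha n) * snd (AB d lam alpha n) ^ (d - 1)"
      by (simp_all del: AB.simps add: AB_Suc)
    note homogeneous_step_inequalities[OF AB[of d n] assms(5) \<open>d \<ge> 2\<close>, folded this]
  }
  note step = this
  show ?thesis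
    using assms step nonneg[OF AB(1)] nonneg[OF AB(2)] nonneg[OF assms(5)] eq_0_iff[OF assms(5)]
      nonneg[OF assms(3)] eq_0_iff[OF assms(3)] one
    by unfold_locales (simp_all del: AB.simps add: AB.simps(1))
qed

theorem proposition5p8:
  fixes d :: nat and alpha lam :: complex and v :: "complex \<Rightarrow> real"
  assumes "d > 2"
    and "alpha \<in> Qbar" and "alpha \<noteq> 0"
    and "lam \<in> Qbar" and "lam \<noteq> 0"
    and "is_absval_Qbar v"
    and "L = max (v alpha) (1 / v alpha)"
    and "n0 \<ge> 1"
  shows "\<exists>h. (\<lambda>n. ln (Mv v d lam alpha n) / real d ^ n) \<longlonglongrightarrow> h \<and>
             \<bar>h - ln (Mv v d lam alpha n0) / real d ^ n0\<bar> \<le> (3 * real d - 2) * ln (2 * L)"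
proof -
  interpret normalised_orbit_norms d "v lam"
      "\<lambda>n. v (fst (AB d lam alpha n))" "\<lambda>n. v (snd (AB d lam alpha n))" L
    using normalised_orbit_norms_AB assms(1-7) by blast
  show ?thesis using log_max_limit[OF assms(8)] unfolding Mv_def .
qed

end
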